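(* Let $\delta\in(0,1]$ and let $G=(V,E)$ be a simple graph on $n$ vertices with minimal degree at least $\delta n$. Then there exists a $\delta$-primary decomposition of $G$.
   Context: $\deg(v,U)$ denotes the number of edges between $v$ and $U$, and $G[U]$ the induced subgraph. The spectral gap of a graph is $1-\lambda_2$, $\lambda_2$ the second largest eigenvalue of the transition matrix of its simple random walk. For $G$ on $n$ vertices with minimal degree at least $\delta n$, a $\delta$-primary decomposition is a partition $V=V_1\sqcup\dots\sqcup V_k$ such that: (1) $k\le 2/\delta$; (2) $|V_i|\ge\delta n/2$ for every $i\in[k]$; (3) for every $i\in[k]$ and $v\in V_i$, $\deg(v,V_i)\ge \delta^4 n/40$; (4) for every $i\in[k]$, the spectral gap of $G[V_i]$ is at least $\delta^{10}/2^{22}$. *)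

theory Defs
  imports "Jordan_Normal_Form.Char_Poly" "HOL-Computational_Algebra.Polynomial"
begin

definition simple_graph :: "('a \<Rightarrow> 'a \<Rightarrow> bool) \<Rightarrow> 'a set \<Rightarrow> bool" where
  "simple_graph E V \<longleftrightarrow> finite V \<and> (\<forall>u v. E u v \<longrightarrow> u \<in> V \<and> v \<in> V)
     \<and> (\<forall>u v. E u v \<longrightarrow> E v u) \<and> (\<forall>v. \<not> E v v)"

definition deg :: "('a \<Rightarrow> 'a \<Rightarrow> bool) \<Rightarrow> 'a \<Rightarrow> 'a set \<Rightarrow> nat" where
  "deg E v U = card {u \<in> U. E v u}"

text \<open>Transition matrix of the simple random walk on the induced subgraph G[U],
  w.r.t. a fixed enumeration of U (eigenvalues do not depend on it).\<close>
definition enum_of :: "'a set \<Rightarrow> 'a list" where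
  "enum_of U = (SOME xs. set xs = U \<and> distinct xs)"

definition walk_matrix :: "('a \<Rightarrow> 'a \<Rightarrow> bool) \<Rightarrow> 'a set \<Rightarrow> real mat" where
  "walk_matrix E U = (let xs = enum_of U in
     mat (length xs) (length xs)
       (\<lambda>(i, j). if E (xs ! i) (xs ! j) then 1 / real (deg E (xs ! i) U) else 0))"

definition eigenvalues_desc :: "real mat \<Rightarrow> real list" where
  "eigenvalues_desc A = rev (sorted_list_of_multiset (proots (char_poly A)))"

definition lambda2 :: "('a \<Rightarrow> 'a \<Rightarrow> bool) \<Rightarrow> 'a set \<Rightarrow> real" where
  "lambda2 E U = eigenvalues_desc (walk_matrix E U) ! 1"

definition spectral_gap :: "('a \<Rightarrow> 'a \<Rightarrow> bool) \<Rightarrow> 'a set \<Rightarrow> real" where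
  "spectral_gap E U = 1 - lambda2 E U"

definition primary_decomposition ::
  "('a \<Rightarrow> 'a \<Rightarrow> bool) \<Rightarrow> 'a set \<Rightarrow> real \<Rightarrow> nat \<Rightarrow> (nat \<Rightarrow> 'a set) \<Rightarrow> bool" where
  "primary_decomposition E V \<delta> k Vs \<longleftrightarrow>
     (\<forall>i<k. Vs i \<noteq> {} \<and> Vs i \<subseteq> V) \<and> (\<Union>i<k. Vs i) = V \<and>
     (\<forall>i<k. \<forall>j<k. i \<noteq> j \<longrightarrow> Vs i \<inter> Vs j = {}) \<and>
     real k \<le> 2 / \<delta> \<and>
     (\<forall>i<k. real (card (Vs i)) \<ge> \<delta> * real (card V) / 2) \<and>
     (\<forall>i<k. \<forall>v\<in>Vs i. real (deg E v (Vs i)) \<ge> \<delta> ^ 4 * real (card V) / 40) \<and>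
     (\<forall>i<k. spectral_gap E (Vs i) \<ge> \<delta> ^ 10 / 2 ^ 22)"

end

theory Submission
  imports Defs "HOL-Library.FuncSet"
    "Jordan_Normal_Form.Jordan_Normal_Form_Existence" "Jordan_Normal_Form.Jordan_Normal_Form_Uniqueness"
begin

text \<open>Put \<open>\<phi> = \<delta>\<^sup>2 / 4\<close> and label the vertices so as to minimise a potential that charges
  \<open>\<phi>\<close> for every ordered pair of vertices with equal labels and \<open>1\<close> for every edge between
  different labels. Moving a set of vertices out of its part cannot lower the potential, so every part
  is a \<open>\<phi>\<close>-cut expander; neither can merging two parts or moving a single vertex, which together
  with the minimum degree \<open>\<delta> n\<close> gives every part at least \<open>\<delta> n / 2\<close> vertices and every vertex
  at least \<open>\<delta>\<^sup>2 n / 4\<close> neighbours in its own part. Cut expansion yields, by a co-area argument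
  at a median, a Poincare inequality for the degree-weighted norm; since the random walk is
  self-adjoint for that norm, it has at most one eigenvalue, counted with multiplicity, above
  \<open>1 - \<phi>\<^sup>2 / 32\<close>.\<close>

section \<open>Cut expansion implies a Poincare inequality\<close>

definition cut_expander :: "real \<Rightarrow> ('b \<Rightarrow> 'b \<Rightarrow> real) \<Rightarrow> 'b set \<Rightarrow> bool" where
  "cut_expander \<phi> r W \<longleftrightarrow>
     (\<forall>S\<subseteq>W. \<phi> * real (card S) * real (card (W - S)) \<le> (\<Sum>x\<in>S. \<Sum>y\<in>W - S. r x y))"

lemma sum_sum_if_out_in:
  fixes h :: "'b \<Rightarrow> 'b \<Rightarrow> real"
  assumes "finite W" and "T \<subseteq> W"
  shows "(\<Sum>x\<in>W. \<Sum>y\<in>W. if x \<notin> T \<and> y \<in> T then h x y else 0) = (\<Sum>x\<in>W - T. \<Sum>y\<in>T. h x y)"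
proof -
  have "(\<Sum>x\<in>W. \<Sum>y\<in>W. if x \<notin> T \<and> y \<in> T then h x y else 0)
      = (\<Sum>x\<in>W. if x \<in> W - T then (\<Sum>y\<in>W. if y \<in> T then h x y else 0) else 0)"
    by (intro sum.cong) auto
  also have "\<dots> = (\<Sum>x\<in>W - T. \<Sum>y\<in>T. h x y)"
    using assms by (simp add: sum.If_cases Int_absorb1 Int_absorb2 flip: Diff_eq Compl_eq)
  finally show ?thesis .
qed

text \<open>\<open>g'\<close> lowers the top level set \<open>T\<close> of \<open>g\<close> to the next value of \<open>g\<close>, and \<open>d\<close> is the
  gap between these two values.\<close>
lemma lower_top_level_set:
  fixes g :: "'b \<Rightarrow> real"
  assumes fin: "finite W" and "\<not> card (g ` W) \<le> 1"
  obtains g' T d where "card (g' ` W) < card (g ` W)" and "T \<subseteq> W" and "0 < d"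
    and "\<And>x y. x \<in> W \<Longrightarrow> y \<in> W \<Longrightarrow>
      max 0 (g y - g x) = max 0 (g' y - g' x) + (if x \<notin> T \<and> y \<in> T then d else 0)"
proof -
  have fgW: "finite (g ` W)" using fin by simp
  define M where "M = Max (g ` W)"
  have "g ` W \<noteq> {}" using assms(2) by auto
  then have M: "M \<in> g ` W" "\<And>x. x \<in> W \<Longrightarrow> g x \<le> M"
    using fgW unfolding M_def by (auto intro: Max_in)
  have "g ` W - {M} \<noteq> {}"
  proof
    assume "g ` W - {M} = {}"
    then have "card (g ` W) \<le> card {M}" using fgW by (intro card_mono) auto
    with assms(2) show False by simp
  qed
  define M' where "M' = Max (g ` W - {M})"
  have M': "M' \<in> g ` W - {M}" "\<And>x. x \<in> W \<Longrightarrow> g x \<noteq> M \<Longrightarrow> g x \<le> M'"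
    using \<open>g ` W - {M} \<noteq> {}\<close> fgW unfolding M'_def by (metis Max_in finite_Diff, simp)
  have "M' \<le> M" using M'(1) M(2) by auto
  with M'(1) have "M' < M" by simp
  define g' where "g' = (\<lambda>x. if g x = M then M' else g x)"
  have "g' ` W = g ` W - {M}"
  proof
    show "g' ` W \<subseteq> g ` W - {M}" using M'(1) unfolding g'_def by auto
    show "g ` W - {M} \<subseteq> g' ` W"
    proof
      fix z assume "z \<in> g ` W - {M}"
      then obtain x where "x \<in> W" "z = g x" "g x \<noteq> M" by auto
      then show "z \<in> g' ` W" unfolding g'_def by (auto intro!: image_eqI[of _ _ x])
    qed
  qed
  then have "card (g' ` W) < card (g ` W)" using M fgW by (metis card_Diff1_less)
  moreover have "{x\<in>W. g x = M} \<subseteq> W" "0 < M - M'" using \<open>M' < M\<close> by auto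
  moreover have "max 0 (g y - g x) = max 0 (g' y - g' x)
      + (if x \<notin> {x\<in>W. g x = M} \<and> y \<in> {x\<in>W. g x = M} then M - M' else 0)"
    if "x \<in> W" "y \<in> W" for x y
    using M(2)[of x] M(2)[of y] M'(2)[of x] M'(2)[of y] \<open>M' < M\<close> that unfolding g'_def by auto
  ultimately show thesis by (rule that)
qed

text \<open>Co-area argument, by induction on the number of values of \<open>g\<close>.\<close>
lemma cut_expander_sum_max_diff:
  fixes g :: "'b \<Rightarrow> real"
  assumes fin: "finite W" and \<phi>: "\<phi> \<ge> 0" and cut: "cut_expander \<phi> r W"
  shows "\<phi> * (\<Sum>x\<in>W. \<Sum>y\<in>W. max 0 (g y - g x)) \<le> (\<Sum>x\<in>W. \<Sum>y\<in>W. r x y * max 0 (g y - g x))"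
proof (induction "card (g ` W)" arbitrary: g rule: less_induct)
  case less
  show ?case
  proof (cases "card (g ` W) \<le> 1")
    case True
    have "max 0 (g y - g x) = 0" if "x \<in> W" "y \<in> W" for x y
    proof -
      have "g x = g y"
        using True fin that card_le_Suc0_iff_eq[of "g ` W"] by (metis One_nat_def finite_imageI imageI)
      then show ?thesis by simp
    qed
    then show ?thesis by simp
  next
    case False
    obtain g' T d where lt: "card (g' ` W) < card (g ` W)" and T: "T \<subseteq> W" and "0 < d"
      and level: "\<And>x y. x \<in> W \<Longrightarrow> y \<in> W \<Longrightarrow>
        max 0 (g y - g x) = max 0 (g' y - g' x) + (if x \<notin> T \<and> y \<in> T then d else 0)"
      using lower_top_level_set[OF fin False] by blast
    note IH = less(1)[OF lt]
    have "W - (W - T) = T" using T by auto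
    then have cut_T: "\<phi> * card (W - T) * card T \<le> (\<Sum>x\<in>W - T. \<Sum>y\<in>T. r x y)"
      using cut unfolding cut_expander_def by (metis Diff_subset)
    have "\<phi> * (\<Sum>x\<in>W - T. \<Sum>y\<in>T. d) = d * (\<phi> * card (W - T) * card T)" by simp
    also have "\<dots> \<le> d * (\<Sum>x\<in>W - T. \<Sum>y\<in>T. r x y)"
      using cut_T \<open>0 < d\<close> by (intro mult_left_mono) auto
    also have "\<dots> = (\<Sum>x\<in>W - T. \<Sum>y\<in>T. r x y * d)" by (simp add: sum_distrib_left mult.commute)
    finally have "\<phi> * (\<Sum>x\<in>W - T. \<Sum>y\<in>T. d) \<le> (\<Sum>x\<in>W - T. \<Sum>y\<in>T. r x y * d)" .
    moreover have "(\<Sum>x\<in>W. \<Sum>y\<in>W. max 0 (g y - g x))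
        = (\<Sum>x\<in>W. \<Sum>y\<in>W. max 0 (g' y - g' x)) + (\<Sum>x\<in>W - T. \<Sum>y\<in>T. d)"
      using sum_sum_if_out_in[OF fin T, of "\<lambda>_ _. d"]
      by (simp add: level sum.distrib cong: sum.cong)
    moreover have "r x y * max 0 (g y - g x)
        = r x y * max 0 (g' y - g' x) + (if x \<notin> T \<and> y \<in> T then r x y * d else 0)"
      if "x \<in> W" "y \<in> W" for x y
      using level[OF that] by (simp add: distrib_left)
    then have "(\<Sum>x\<in>W. \<Sum>y\<in>W. r x y * max 0 (g y - g x))
        = (\<Sum>x\<in>W. \<Sum>y\<in>W. r x y * max 0 (g' y - g' x)) + (\<Sum>x\<in>W - T. \<Sum>y\<in>T. r x y * d)"
      using sum_sum_if_out_in[OF fin T, of "\<lambda>x y. r x y * d"]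
      by (simp add: sum.distrib cong: sum.cong)
    ultimately show ?thesis
      using IH by (simp add: distrib_left)
  qed
qed

lemma max_sq_diff_le:
  fixes a b t :: real
  assumes "t > 0"
  shows "max 0 (b\<^sup>2 - a\<^sup>2) \<le> t / 2 * (b - a)\<^sup>2 + (a\<^sup>2 + b\<^sup>2) / t"
proof -
  have "\<bar>b - a\<bar> * \<bar>b + a\<bar> \<le> t / 2 * (b - a)\<^sup>2 + (b + a)\<^sup>2 / (2 * t)"
  proof -
    have "0 \<le> (t * \<bar>b - a\<bar> - \<bar>b + a\<bar>)\<^sup>2 / (2 * t)" using assms by simp
    also have "\<dots> = t / 2 * (b - a)\<^sup>2 + (b + a)\<^sup>2 / (2 * t) - \<bar>b - a\<bar> * \<bar>b + a\<bar>"
      using assms by (simp add: power2_eq_square field_simps)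
    finally show ?thesis by simp
  qed
  moreover have "(b + a)\<^sup>2 / (2 * t) \<le> (a\<^sup>2 + b\<^sup>2) / t"
  proof -
    have "(b + a)\<^sup>2 \<le> 2 * (a\<^sup>2 + b\<^sup>2)"
      using zero_le_power2[of "a - b"] by (simp add: power2_eq_square algebra_simps)
    then have "(b + a)\<^sup>2 / (2 * t) \<le> 2 * (a\<^sup>2 + b\<^sup>2) / (2 * t)"
      using assms by (intro divide_right_mono) auto
    also have "\<dots> = (a\<^sup>2 + b\<^sup>2) / t"
      by (rule mult_divide_mult_cancel_left) simp
    finally show ?thesis .
  qed
  moreover have "b\<^sup>2 - a\<^sup>2 \<le> \<bar>b - a\<bar> * \<bar>b + a\<bar>"
    by (simp add: power2_eq_square algebra_simps flip: abs_mult)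
  moreover have "0 \<le> t / 2 * (b - a)\<^sup>2 + (a\<^sup>2 + b\<^sup>2) / t" using assms by simp
  ultimately show ?thesis by linarith
qed

lemma sum_max_sq_diff_le:
  fixes h :: "'b \<Rightarrow> real"
  assumes t: "t > 0" and r: "\<And>x y. 0 \<le> r x y" "\<And>x y. r x y \<le> 1"
  shows "(\<Sum>x\<in>W. \<Sum>y\<in>W. r x y * max 0 ((h y)\<^sup>2 - (h x)\<^sup>2))
    \<le> t / 2 * (\<Sum>x\<in>W. \<Sum>y\<in>W. r x y * (h y - h x)\<^sup>2) + 2 * card W * (\<Sum>x\<in>W. (h x)\<^sup>2) / t"
proof -
  have "r x y * max 0 ((h y)\<^sup>2 - (h x)\<^sup>2)
      \<le> t / 2 * (r x y * (h y - h x)\<^sup>2) + r x y * ((h x)\<^sup>2 + (h y)\<^sup>2) / t" for x y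
    using mult_left_mono[OF max_sq_diff_le[OF t, of "h y" "h x"] r(1)[of x y]]
    by (simp add: algebra_simps add_divide_distrib)
  then have "(\<Sum>x\<in>W. \<Sum>y\<in>W. r x y * max 0 ((h y)\<^sup>2 - (h x)\<^sup>2))
      \<le> (\<Sum>x\<in>W. \<Sum>y\<in>W. t / 2 * (r x y * (h y - h x)\<^sup>2) + r x y * ((h x)\<^sup>2 + (h y)\<^sup>2) / t)"
    by (intro sum_mono)
  also have "\<dots> = t / 2 * (\<Sum>x\<in>W. \<Sum>y\<in>W. r x y * (h y - h x)\<^sup>2)
      + (\<Sum>x\<in>W. \<Sum>y\<in>W. r x y * ((h x)\<^sup>2 + (h y)\<^sup>2)) / t"
    by (simp add: sum.distrib sum_distrib_left sum_divide_distrib)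
  also have "(\<Sum>x\<in>W. \<Sum>y\<in>W. r x y * ((h x)\<^sup>2 + (h y)\<^sup>2)) \<le> (\<Sum>x\<in>W. \<Sum>y\<in>W. (h x)\<^sup>2 + (h y)\<^sup>2)"
    using r by (intro sum_mono mult_left_le_one_le) auto
  also have "\<dots> = 2 * card W * (\<Sum>x\<in>W. (h x)\<^sup>2)"
    by (simp add: sum.distrib sum_distrib_left[symmetric])
  finally show ?thesis using t by (simp add: divide_right_mono)
qed

text \<open>Apply the co-area inequality to \<open>h\<^sup>2\<close> and bound its increments by AM-GM with weight
  \<open>8 / \<phi>\<close>.\<close>
lemma cut_expander_poincare_vanishing_half:
  fixes h :: "'b \<Rightarrow> real"
  assumes fin: "finite W" and \<phi>: "\<phi> > 0" and r: "\<And>x y. 0 \<le> r x y" "\<And>x y. r x y \<le> 1"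
    and cut: "cut_expander \<phi> r W" and zeros: "card W \<le> 2 * card {x\<in>W. h x = 0}"
  shows "\<phi>\<^sup>2 * card W * (\<Sum>x\<in>W. (h x)\<^sup>2) \<le> 16 * (\<Sum>x\<in>W. \<Sum>y\<in>W. r x y * (h y - h x)\<^sup>2)"
proof -
  define Q where "Q = (\<Sum>x\<in>W. (h x)\<^sup>2)"
  define A where "A = (\<Sum>x\<in>W. \<Sum>y\<in>W. r x y * (h y - h x)\<^sup>2)"
  define D where "D = (\<Sum>x\<in>W. \<Sum>y\<in>W. max 0 ((h y)\<^sup>2 - (h x)\<^sup>2))"
  define Z where "Z = {x\<in>W. h x = 0}"
  have Q: "Q \<ge> 0" unfolding Q_def by (simp add: sum_nonneg)
  have "card Z * Q = (\<Sum>x\<in>Z. \<Sum>y\<in>W. max 0 ((h y)\<^sup>2 - (h x)\<^sup>2))"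
    by (simp add: Z_def Q_def)
  also have "\<dots> \<le> D"
    unfolding D_def using fin by (intro sum_mono2) (auto simp: Z_def intro: sum_nonneg)
  finally have low: "card Z * Q \<le> D" .
  have "\<phi> * D \<le> (\<Sum>x\<in>W. \<Sum>y\<in>W. r x y * max 0 ((h y)\<^sup>2 - (h x)\<^sup>2))"
    unfolding D_def using cut_expander_sum_max_diff[OF fin _ cut] \<phi> by simp
  also have "\<dots> \<le> 4 / \<phi> * A + \<phi> * card W * Q / 4"
    using sum_max_sq_diff_le[where t = "8 / \<phi>" and r = r and W = W and h = h] \<phi> r
    unfolding A_def Q_def by simp
  finally have up: "\<phi> * D \<le> 4 / \<phi> * A + \<phi> * card W * Q / 4" .
  have "\<phi> * (card W * Q) \<le> \<phi> * (2 * card Z * Q)"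
    using zeros Q \<phi> unfolding Z_def by (intro mult_left_mono mult_right_mono) auto
  also have "\<dots> \<le> 2 * (\<phi> * D)" using low \<phi> by simp
  also have "\<dots> \<le> 8 * A / \<phi> + \<phi> * (card W * Q) / 2"
    using up by simp
  finally have "\<phi> * (card W * Q) \<le> 16 * A / \<phi>" by simp
  then show ?thesis
    using \<phi> by (simp add: Q_def A_def pos_le_divide_eq power2_eq_square mult_ac)
qed

lemma exists_median:
  fixes f :: "'b \<Rightarrow> real"
  assumes fin: "finite W" and ne: "W \<noteq> {}"
  obtains c where "2 * card {x\<in>W. f x < c} \<le> card W" and "2 * card {x\<in>W. c < f x} \<le> card W"
proof -
  define C where "C = {c\<in>f ` W. card W \<le> 2 * card {x\<in>W. f x \<le> c}}"
  have "{x\<in>W. f x \<le> Max (f ` W)} = W" using fin by auto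
  then have "Max (f ` W) \<in> C" using fin ne by (simp add: C_def)
  then have C: "finite C" "C \<noteq> {}" using fin by (auto simp: C_def)
  define c where "c = Min C"
  have "c \<in> C" using C unfolding c_def by (rule Min_in)
  have "2 * card {x\<in>W. f x < c} \<le> card W"
  proof (cases "{x\<in>W. f x < c} = {}")
    case False
    have fin0: "finite (f ` {x\<in>W. f x < c})" using fin by simp
    define c0 where "c0 = Max (f ` {x\<in>W. f x < c})"
    have "c0 \<in> f ` {x\<in>W. f x < c}"
      unfolding c0_def by (rule Max_in[OF fin0]) (use False in simp)
    moreover have c0_max: "f x \<le> c0" if "x \<in> W" "f x < c" for x
      using fin0 that unfolding c0_def by simp
    ultimately have "c0 \<notin> C" "c0 \<in> f ` W" using C Min_le unfolding c_def by fastforce+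
    moreover have "{x\<in>W. f x < c} = {x\<in>W. f x \<le> c0}"
      using c0_max \<open>c0 \<in> f ` {x\<in>W. f x < c}\<close> by fastforce
    ultimately show ?thesis unfolding C_def by auto
  next
    case True
    then show ?thesis by (metis card.empty le0 mult_0_right)
  qed
  moreover have "2 * card {x\<in>W. c < f x} \<le> card W"
  proof -
    have "{x\<in>W. c < f x} = W - {x\<in>W. f x \<le> c}" by auto
    then have "card {x\<in>W. c < f x} = card W - card {x\<in>W. f x \<le> c}"
      using fin by (simp add: card_Diff_subset)
    then show ?thesis using \<open>c \<in> C\<close> unfolding C_def by auto
  qed
  ultimately show ?thesis using that by blast
qed

lemma pos_neg_part_diff_sq_le:
  fixes a b :: real
  shows "(max 0 a - max 0 b)\<^sup>2 + (max 0 (- a) - max 0 (- b))\<^sup>2 \<le> (a - b)\<^sup>2"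
  using mult_nonneg_nonpos[of a b] mult_nonneg_nonpos[of b a]
  by (cases "0 \<le> a"; cases "0 \<le> b") (auto simp: power2_eq_square algebra_simps)

lemma card_le_twice_card_complement:
  assumes "finite W" and "2 * card {x\<in>W. P x} \<le> card W"
  shows "card W \<le> 2 * card {x\<in>W. \<not> P x}"
proof -
  have "card {x\<in>W. \<not> P x} = card W - card {x\<in>W. P x}"
    using assms(1) by (subst card_Diff_subset[symmetric]) (auto intro: arg_cong[where f = card])
  moreover have "card {x\<in>W. P x} \<le> card W" using assms(1) by (intro card_mono) auto
  ultimately show ?thesis using assms(2) by linarith
qed

lemma weighted_sum_sq_le_shifted:
  fixes d f :: "'b \<Rightarrow> real"
  assumes "\<And>x. x \<in> W \<Longrightarrow> 0 \<le> d x" and "(\<Sum>x\<in>W. d x * f x) = 0"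
  shows "(\<Sum>x\<in>W. d x * (f x)\<^sup>2) \<le> (\<Sum>x\<in>W. d x * (f x - c)\<^sup>2)"
proof -
  have "d x * (f x - c)\<^sup>2 = d x * (f x)\<^sup>2 - 2 * c * (d x * f x) + c\<^sup>2 * d x" for x
    by (simp add: power2_eq_square algebra_simps)
  then have "(\<Sum>x\<in>W. d x * (f x - c)\<^sup>2)
      = (\<Sum>x\<in>W. d x * (f x)\<^sup>2) - 2 * c * (\<Sum>x\<in>W. d x * f x) + c\<^sup>2 * (\<Sum>x\<in>W. d x)"
    by (simp add: sum.distrib sum_subtractf sum_distrib_left)
  then have "(\<Sum>x\<in>W. d x * (f x - c)\<^sup>2) = (\<Sum>x\<in>W. d x * (f x)\<^sup>2) + c\<^sup>2 * (\<Sum>x\<in>W. d x)"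
    using assms(2) by simp
  moreover have "0 \<le> c\<^sup>2 * (\<Sum>x\<in>W. d x)" using assms(1) by (simp add: sum_nonneg)
  ultimately show ?thesis by linarith
qed

lemma dirichlet_pos_neg_parts_le:
  fixes f :: "'b \<Rightarrow> real"
  assumes "\<And>x y. 0 \<le> r x y"
  shows "(\<Sum>x\<in>W. \<Sum>y\<in>W. r x y * (max 0 (f y - c) - max 0 (f x - c))\<^sup>2)
    + (\<Sum>x\<in>W. \<Sum>y\<in>W. r x y * (max 0 (c - f y) - max 0 (c - f x))\<^sup>2)
    \<le> (\<Sum>x\<in>W. \<Sum>y\<in>W. r x y * (f y - f x)\<^sup>2)"
proof -
  have "r x y * (max 0 (f y - c) - max 0 (f x - c))\<^sup>2 + r x y * (max 0 (c - f y) - max 0 (c - f x))\<^sup>2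
      \<le> r x y * (f y - f x)\<^sup>2" for x y
    using mult_left_mono[OF pos_neg_part_diff_sq_le[of "f y - c" "f x - c"] assms[of x y]]
    by (simp add: distrib_left)
  then show ?thesis
    unfolding sum.distrib[symmetric] by (intro sum_mono)
qed

text \<open>Split \<open>f - c\<close> at a median \<open>c\<close> into its positive and negative parts, each of which
  vanishes on half of \<open>W\<close>; the mean-zero condition lets the shift by \<open>c\<close> only increase the
  weighted norm.\<close>
lemma cut_expander_poincare:
  fixes f :: "'b \<Rightarrow> real"
  assumes fin: "finite W" and \<phi>: "\<phi> > 0" and r: "\<And>x y. 0 \<le> r x y" "\<And>x y. r x y \<le> 1"
    and cut: "cut_expander \<phi> r W" and mean0: "(\<Sum>x\<in>W. (\<Sum>y\<in>W. r x y) * f x) = 0"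
  shows "\<phi>\<^sup>2 * (\<Sum>x\<in>W. (\<Sum>y\<in>W. r x y) * (f x)\<^sup>2) \<le> 16 * (\<Sum>x\<in>W. \<Sum>y\<in>W. r x y * (f y - f x)\<^sup>2)"
proof (cases "W = {}")
  case False
  obtain c where c: "2 * card {x\<in>W. f x < c} \<le> card W" "2 * card {x\<in>W. c < f x} \<le> card W"
    using exists_median[OF fin False] by blast
  define h1 where "h1 x = max 0 (f x - c)" for x
  define h2 where "h2 x = max 0 (c - f x)" for x
  define d where "d x = (\<Sum>y\<in>W. r x y)" for x
  have "card W \<le> 2 * card {x\<in>W. \<not> c < f x}" "card W \<le> 2 * card {x\<in>W. \<not> f x < c}"
    using card_le_twice_card_complement[OF fin] c by auto
  moreover have "{x\<in>W. \<not> c < f x} = {x\<in>W. h1 x = 0}" "{x\<in>W. \<not> f x < c} = {x\<in>W. h2 x = 0}"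
    by (auto simp: h1_def h2_def)
  ultimately have h1: "\<phi>\<^sup>2 * card W * (\<Sum>x\<in>W. (h1 x)\<^sup>2) \<le> 16 * (\<Sum>x\<in>W. \<Sum>y\<in>W. r x y * (h1 y - h1 x)\<^sup>2)"
    and h2: "\<phi>\<^sup>2 * card W * (\<Sum>x\<in>W. (h2 x)\<^sup>2) \<le> 16 * (\<Sum>x\<in>W. \<Sum>y\<in>W. r x y * (h2 y - h2 x)\<^sup>2)"
    using cut_expander_poincare_vanishing_half[OF fin \<phi> r cut] by auto
  have d: "0 \<le> d x" "d x \<le> card W" for x
    using sum_mono[of W "r x" "\<lambda>_. 1"] r unfolding d_def by (auto intro: sum_nonneg)
  have "(\<Sum>x\<in>W. d x * (f x)\<^sup>2) \<le> (\<Sum>x\<in>W. d x * (f x - c)\<^sup>2)"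
    using d mean0 unfolding d_def by (intro weighted_sum_sq_le_shifted) auto
  also have "\<dots> \<le> (\<Sum>x\<in>W. card W * (f x - c)\<^sup>2)"
    using d by (intro sum_mono mult_right_mono) auto
  also have "\<dots> = card W * (\<Sum>x\<in>W. (h1 x)\<^sup>2 + (h2 x)\<^sup>2)"
  proof -
    have "(h1 x)\<^sup>2 + (h2 x)\<^sup>2 = (f x - c)\<^sup>2" for x
      by (cases "c \<le> f x") (simp_all add: h1_def h2_def max_def power2_commute[of c "f x"])
    then show ?thesis by (simp add: sum_distrib_left)
  qed
  also have "\<dots> = card W * (\<Sum>x\<in>W. (h1 x)\<^sup>2) + card W * (\<Sum>x\<in>W. (h2 x)\<^sup>2)"
    by (simp only: sum.distrib distrib_left)
  finally have "\<phi>\<^sup>2 * (\<Sum>x\<in>W. d x * (f x)\<^sup>2)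
      \<le> \<phi>\<^sup>2 * (card W * (\<Sum>x\<in>W. (h1 x)\<^sup>2) + card W * (\<Sum>x\<in>W. (h2 x)\<^sup>2))"
    by (rule mult_left_mono) simp
  also have "\<dots> = \<phi>\<^sup>2 * card W * (\<Sum>x\<in>W. (h1 x)\<^sup>2) + \<phi>\<^sup>2 * card W * (\<Sum>x\<in>W. (h2 x)\<^sup>2)"
    by (simp only: distrib_left mult.assoc)
  finally show ?thesis
    using h1 h2 dirichlet_pos_neg_parts_le[where r = r and W = W and f = f and c = c, OF r(1)]
    unfolding d_def h1_def h2_def by linarith
qed simp

section \<open>The random walk of a symmetric relation\<close>

locale sym_walk =
  fixes m :: nat and R :: "nat \<Rightarrow> nat \<Rightarrow> bool"
  assumes R_sym: "\<And>i j. R i j \<Longrightarrow> R j i"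
    and no_isolated: "\<And>i. i < m \<Longrightarrow> \<exists>j<m. R i j"
begin

definition adj :: "nat \<Rightarrow> nat \<Rightarrow> real" where
  "adj i j = of_bool (R i j)"

definition vdeg :: "nat \<Rightarrow> real" where
  "vdeg i = (\<Sum>j<m. adj i j)"

definition walk :: "(nat \<Rightarrow> real) \<Rightarrow> nat \<Rightarrow> real" where
  "walk f i = (\<Sum>j<m. adj i j * f j) / vdeg i"

definition inner_deg :: "(nat \<Rightarrow> real) \<Rightarrow> (nat \<Rightarrow> real) \<Rightarrow> real" where
  "inner_deg f g = (\<Sum>i<m. vdeg i * f i * g i)"

definition mass :: "(nat \<Rightarrow> real) \<Rightarrow> real" where
  "mass f = (\<Sum>i<m. vdeg i * f i)"

definition dirichlet :: "(nat \<Rightarrow> real) \<Rightarrow> real" where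
  "dirichlet f = (\<Sum>i<m. \<Sum>j<m. adj i j * (f j - f i)\<^sup>2)"

definition eigenfun :: "real \<Rightarrow> (nat \<Rightarrow> real) \<Rightarrow> bool" where
  "eigenfun \<alpha> f \<longleftrightarrow> (\<forall>i<m. walk f i = \<alpha> * f i)"

lemma vdeg_pos:
  assumes "i < m"
  shows "0 < vdeg i"
proof -
  obtain j where "j < m" "R i j" using no_isolated[OF assms] by blast
  then have "adj i j \<le> vdeg i" unfolding vdeg_def by (intro member_le_sum) (auto simp: adj_def)
  with \<open>R i j\<close> show ?thesis by (simp add: adj_def)
qed

lemma adj_sym: "adj i j = adj j i"
  using R_sym by (auto simp: adj_def)

lemma walk_cong: "(\<And>j. j < m \<Longrightarrow> f j = g j) \<Longrightarrow> walk f i = walk g i"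
  unfolding walk_def by (intro arg_cong2[where f = "(/)"] sum.cong) auto

lemma walk_lin: "walk (\<lambda>i. a * f i + b * g i) i = a * walk f i + b * walk g i"
  unfolding walk_def by (simp add: algebra_simps sum.distrib sum_distrib_left add_divide_distrib)

lemma inner_deg_lin_left: "inner_deg (\<lambda>i. a * f i + b * g i) h = a * inner_deg f h + b * inner_deg g h"
  unfolding inner_deg_def by (simp add: algebra_simps sum.distrib sum_distrib_left)

lemma inner_deg_comm: "inner_deg f g = inner_deg g f"
  unfolding inner_deg_def by (simp add: mult_ac)

lemma mass_lin: "mass (\<lambda>i. a * f i + b * g i) = a * mass f + b * mass g"
  unfolding mass_def by (simp add: algebra_simps sum.distrib sum_distrib_left)

lemma inner_deg_walk: "inner_deg (walk f) g = (\<Sum>i<m. \<Sum>j<m. adj i j * f j * g i)"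
  unfolding inner_deg_def walk_def by (intro sum.cong) (auto simp: sum_distrib_right dest: vdeg_pos)

lemma walk_self_adjoint: "inner_deg (walk f) g = inner_deg f (walk g)"
proof -
  have "inner_deg (walk f) g = (\<Sum>j<m. \<Sum>i<m. adj j i * g i * f j)"
    unfolding inner_deg_walk by (subst sum.swap) (simp add: adj_sym mult_ac)
  also have "\<dots> = inner_deg f (walk g)"
    by (simp add: inner_deg_walk inner_deg_comm[of f])
  finally show ?thesis .
qed

lemma dirichlet_eq: "dirichlet f = 2 * (inner_deg f f - inner_deg (walk f) f)"
proof -
  have "(\<Sum>i<m. \<Sum>j<m. adj i j * (f j)\<^sup>2) = inner_deg f f"
    unfolding inner_deg_def vdeg_def
    by (subst sum.swap) (simp add: adj_sym sum_distrib_left power2_eq_square mult_ac)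
  moreover have "(\<Sum>i<m. \<Sum>j<m. adj i j * (f i)\<^sup>2) = inner_deg f f"
    unfolding inner_deg_def vdeg_def by (simp add: sum_distrib_left power2_eq_square mult_ac)
  ultimately show ?thesis
    unfolding dirichlet_def inner_deg_walk
    by (simp add: power2_eq_square algebra_simps sum.distrib sum_subtractf sum_distrib_left)
qed

lemma inner_deg_self_summand_nonneg: "i < m \<Longrightarrow> 0 \<le> vdeg i * f i * f i"
  using vdeg_pos[of i] by (simp add: mult.assoc)

lemma inner_deg_self_nonneg: "0 \<le> inner_deg f f"
  unfolding inner_deg_def by (intro sum_nonneg inner_deg_self_summand_nonneg) simp

lemma inner_deg_self_eq_0:
  assumes "inner_deg f f = 0" and "i < m"
  shows "f i = 0"
proof -
  have "vdeg i * f i * f i = 0"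
    using assms sum_nonneg_eq_0_iff[of "{..<m}" "\<lambda>j. vdeg j * f j * f j"]
      inner_deg_self_summand_nonneg unfolding inner_deg_def by simp
  then show ?thesis using vdeg_pos[OF assms(2)] by simp
qed

lemma eigenfun_inner_deg: "eigenfun \<alpha> f \<Longrightarrow> inner_deg (walk f) g = \<alpha> * inner_deg f g"
  unfolding eigenfun_def inner_deg_def by (simp add: sum_distrib_left mult_ac)

lemma eigenfun_orthogonal:
  assumes "eigenfun \<alpha> u" and "eigenfun \<beta> v" and "\<alpha> \<noteq> \<beta>"
  shows "inner_deg u v = 0"
  using eigenfun_inner_deg[OF assms(1), of v] eigenfun_inner_deg[OF assms(2), of u] assms(3)
  by (simp add: walk_self_adjoint inner_deg_comm[of _ v])

text \<open>Self-adjointness rules out Jordan blocks.\<close>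
lemma generalised_eigenfun:
  assumes "eigenfun \<alpha> (\<lambda>i. walk v i - \<alpha> * v i)"
  shows "eigenfun \<alpha> v"
proof -
  define w where "w i = walk v i - \<alpha> * v i" for i
  have "inner_deg w w = inner_deg v (walk w) - \<alpha> * inner_deg v w"
    using inner_deg_lin_left[of 1 "walk v" "- \<alpha>" v w]
    by (simp add: w_def[abs_def] walk_self_adjoint)
  also have "inner_deg v (walk w) = \<alpha> * inner_deg v w"
    using eigenfun_inner_deg[OF assms[folded w_def], of v]
    by (simp add: walk_self_adjoint inner_deg_comm)
  finally show ?thesis
    using inner_deg_self_eq_0 unfolding eigenfun_def w_def by fastforce
qed

lemma inner_deg_eigenfun_combination:
  fixes a b :: real
  assumes u: "eigenfun \<alpha> u" and v: "eigenfun \<beta> v" and "\<alpha> \<noteq> \<beta>"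
  defines "g \<equiv> \<lambda>j. a * u j + b * v j"
  shows "inner_deg g g = a\<^sup>2 * inner_deg u u + b\<^sup>2 * inner_deg v v"
    and "inner_deg (walk g) g = a\<^sup>2 * \<alpha> * inner_deg u u + b\<^sup>2 * \<beta> * inner_deg v v"
proof -
  have "inner_deg u v = 0" "inner_deg v u = 0"
    using eigenfun_orthogonal[OF u v \<open>\<alpha> \<noteq> \<beta>\<close>] inner_deg_comm by auto
  then have ug: "inner_deg u g = a * inner_deg u u" and vg: "inner_deg v g = b * inner_deg v v"
    using inner_deg_comm[of _ g] unfolding g_def inner_deg_lin_left by simp_all
  show "inner_deg g g = a\<^sup>2 * inner_deg u u + b\<^sup>2 * inner_deg v v"
    using inner_deg_lin_left[of a u b v g, folded g_def] by (simp add: ug vg power2_eq_square)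
  have "inner_deg (walk g) g = inner_deg (\<lambda>j. (a * \<alpha>) * u j + (b * \<beta>) * v j) g"
    using u v unfolding inner_deg_def eigenfun_def g_def walk_lin
    by (intro sum.cong) (simp_all add: algebra_simps)
  also have "\<dots> = a * \<alpha> * (a * inner_deg u u) + b * \<beta> * (b * inner_deg v v)"
    by (simp only: inner_deg_lin_left ug vg)
  finally show "inner_deg (walk g) g = a\<^sup>2 * \<alpha> * inner_deg u u + b\<^sup>2 * \<beta> * inner_deg v v"
    by (simp add: power2_eq_square mult_ac)
qed

end

locale sym_walk_poincare = sym_walk +
  fixes K :: real
  assumes K_pos: "K > 0"
    and poincare: "\<And>f. mass f = 0 \<Longrightarrow> inner_deg f f \<le> K * dirichlet f"
begin

lemma rayleigh_le:
  assumes "mass f = 0"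
  shows "inner_deg (walk f) f \<le> (1 - 1 / (2 * K)) * inner_deg f f"
  using poincare[OF assms] K_pos by (simp add: dirichlet_eq field_simps)

lemma large_eigenfun_mass_zero:
  assumes "eigenfun \<alpha> f" and "\<alpha> > 1 - 1 / (2 * K)" and "mass f = 0" and "i < m"
  shows "f i = 0"
proof -
  have "\<alpha> * inner_deg f f \<le> (1 - 1 / (2 * K)) * inner_deg f f"
    using rayleigh_le[OF assms(3)] eigenfun_inner_deg[OF assms(1)] by simp
  then have "(\<alpha> - (1 - 1 / (2 * K))) * inner_deg f f \<le> 0"
    by (simp add: left_diff_distrib)
  then have "inner_deg f f = 0"
    using assms(2) inner_deg_self_nonneg[of f] by (simp add: mult_le_0_iff)
  then show ?thesis using inner_deg_self_eq_0 assms(4) by blast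
qed

text \<open>Above \<open>1 - 1 / (2 * K)\<close> there is at most one eigenfunction up to scaling: the
  combination of two eigenfunctions with total mass zero must vanish by the Rayleigh bound.\<close>
lemma large_eigenfuns_dependent:
  assumes u: "eigenfun \<alpha> u" and v: "eigenfun \<beta> v"
    and large: "\<alpha> > 1 - 1 / (2 * K)" "\<beta> > 1 - 1 / (2 * K)" and "i < m"
  shows "mass v * u i = mass u * v i"
proof -
  define a b where "a = mass v" and "b = - mass u"
  define g where "g = (\<lambda>j. a * u j + b * v j)"
  have g_mass: "mass g = 0" unfolding g_def mass_lin a_def b_def by simp
  have "\<forall>j<m. g j = 0"
  proof (cases "\<alpha> = \<beta>")
    case True
    then have "eigenfun \<alpha> g" using u v unfolding eigenfun_def g_def walk_lin
      by (simp add: algebra_simps)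
    then show ?thesis using large_eigenfun_mass_zero[OF _ large(1) g_mass] by blast
  next
    case False
    note gg = inner_deg_eigenfun_combination[OF u v False, of a b, folded g_def]
    define \<theta> where "\<theta> = 1 - 1 / (2 * K)"
    have "a\<^sup>2 * inner_deg u u * (\<alpha> - \<theta>) + b\<^sup>2 * inner_deg v v * (\<beta> - \<theta>) \<le> 0"
      using rayleigh_le[OF g_mass] unfolding gg \<theta>_def[symmetric] by (simp add: algebra_simps)
    moreover have "0 \<le> a\<^sup>2 * inner_deg u u * (\<alpha> - \<theta>)" "0 \<le> b\<^sup>2 * inner_deg v v * (\<beta> - \<theta>)"
      using inner_deg_self_nonneg large unfolding \<theta>_def[symmetric] by simp_all
    ultimately have "a\<^sup>2 * inner_deg u u * (\<alpha> - \<theta>) = 0" "b\<^sup>2 * inner_deg v v * (\<beta> - \<theta>) = 0"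
      by linarith+
    then have "a\<^sup>2 * inner_deg u u = 0" "b\<^sup>2 * inner_deg v v = 0"
      using large unfolding \<theta>_def[symmetric] by simp_all
    then have "inner_deg g g = 0" unfolding gg(1) by linarith
    then show ?thesis using inner_deg_self_eq_0 by blast
  qed
  then show ?thesis using \<open>i < m\<close> unfolding g_def a_def b_def by simp
qed

end

section \<open>The spectrum of the walk matrix\<close>

lemma kernel_dim_le_1:
  fixes B :: "'a :: field mat"
  assumes B: "B \<in> carrier_mat n n" and u: "u \<in> mat_kernel B"
    and multiples: "\<And>v. v \<in> mat_kernel B \<Longrightarrow> \<exists>c. v = c \<cdot>\<^sub>v u"
  shows "kernel_dim B \<le> 1"
proof -
  interpret K: kernel n n B by unfold_locales (rule B)
  have sub: "{u} \<subseteq> mat_kernel B" using u by auto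
  interpret S: submodule class_ring "K.Ker.span {u}" K.VK
    by (rule K.Ker.span_is_submodule[OF sub])
  have "mat_kernel B \<subseteq> K.Ker.span {u}"
  proof
    fix v assume "v \<in> mat_kernel B"
    then obtain c where "v = c \<cdot>\<^sub>v u" using multiples by blast
    moreover have "u \<in> K.Ker.span {u}" using K.Ker.in_own_span[OF sub] by auto
    ultimately show "v \<in> K.Ker.span {u}" using S.smult_closed[of c u] by simp
  qed
  then have "K.Ker.span {u} = mat_kernel B" using K.Ker.span_is_subset2[OF sub] by auto
  then have "K.dim \<le> 1" using K.Ker.dim_le1I u by simp
  then show ?thesis by simp
qed

lemma min_sum_list_le: "min k (sum_list xs) \<le> sum_list (map (min k) (xs :: nat list))"
  by (induct xs) auto

lemma min_order_le_dim_gen_eigenspace: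
  fixes A :: "'a :: conjugatable_ordered_field mat"
  assumes A: "A \<in> carrier_mat n n" and split: "char_poly A = (\<Prod>a\<leftarrow>as. [:- a, 1:])"
  shows "min k (Polynomial.order ev (char_poly A)) \<le> dim_gen_eigenspace A ev k"
proof -
  obtain n_as where jnf: "jordan_nf A n_as" using jordan_nf_exists[OF A split] by blast
  have "[na\<leftarrow>n_as . snd na = ev] = [(n, e)\<leftarrow>n_as . e = ev]" by (rule filter_cong) auto
  then show ?thesis
    using jordan_nf_order[OF jnf, of ev] dim_gen_eigenspace[OF jnf, of ev k]
      min_sum_list_le[of k "map fst [na\<leftarrow>n_as . snd na = ev]"]
    by simp
qed

lemma proots_prod_linear_factors: "proots (\<Prod>r\<leftarrow>rs. [:- r, 1:]) = mset (rs :: 'a :: idom list)"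
proof (induction rs)
  case (Cons a rs)
  have "(\<Prod>r\<leftarrow>rs. [:- r, 1:]) \<noteq> 0" by (auto simp: prod_list_zero_iff)
  then show ?case using Cons proots_mult[of "[:- a, 1:]" "\<Prod>r\<leftarrow>rs. [:- r, 1:]"] by simp
qed simp

lemma eigenvalues_desc_top_two:
  fixes A :: "real mat"
  assumes A: "A \<in> carrier_mat n n" and split: "char_poly A = (\<Prod>r\<leftarrow>rs. [:- r, 1:])"
    and "length rs = n" and "2 \<le> n"
  defines "x \<equiv> eigenvalues_desc A ! 0" and "y \<equiv> eigenvalues_desc A ! 1"
  shows "y \<le> x" and "eigenvalue A x" and "eigenvalue A y"
    and "x = y \<Longrightarrow> 2 \<le> Polynomial.order y (char_poly A)"
proof -
  define l where "l = eigenvalues_desc A"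
  have l: "l = rev (sort rs)"
    unfolding l_def eigenvalues_desc_def split proots_prod_linear_factors by simp
  have cp: "char_poly A \<noteq> 0" using degree_monic_char_poly[OF A] by auto
  have roots: "mset l = proots (char_poly A)" by (simp add: l split proots_prod_linear_factors)
  show "y \<le> x"
    unfolding x_def y_def l_def[symmetric] l using assms(3,4)
    by (simp add: rev_nth numeral_2_eq_2 sorted_nth_mono)
  have "eigenvalue A z" if "z \<in> set l" for z
    using that cp eigenvalue_root_char_poly[OF A] by (simp flip: set_mset_mset add: roots)
  moreover have "x \<in> set l" "y \<in> set l"
    using assms(3,4) nth_mem[of 0 l] nth_mem[of 1 l] unfolding x_def y_def l_def[symmetric]
    by (simp_all add: l)
  ultimately show "eigenvalue A x" "eigenvalue A y" by blast+
  assume "x = y"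
  obtain a b t where "l = a # b # t"
    using assms(3,4) unfolding l by (metis One_nat_def Suc_le_length_iff length_rev length_sort numeral_2_eq_2)
  then have "2 \<le> count (mset l) y" using \<open>x = y\<close> unfolding x_def y_def l_def[symmetric] by simp
  then show "2 \<le> Polynomial.order y (char_poly A)" using cp unfolding roots by (simp add: count_proots)
qed

context sym_walk
begin

definition walk_mat :: "real mat" where
  "walk_mat = mat m m (\<lambda>(i, j). adj i j / vdeg i)"

lemma walk_mat_carrier: "walk_mat \<in> carrier_mat m m"
  unfolding walk_mat_def by simp

lemma walk_mat_mult_vec:
  assumes "v \<in> carrier_vec m" and "i < m"
  shows "(walk_mat *\<^sub>v v) $ i = walk (($) v) i"
  using assms unfolding walk_mat_def walk_def
  by (simp add: scalar_prod_def sum_divide_distrib atLeast0LessThan mult.commute)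

lemma char_matrix_walk_mat_mult_vec:
  assumes "v \<in> carrier_vec m" and "i < m"
  shows "(char_matrix walk_mat \<alpha> *\<^sub>v v) $ i = walk (($) v) i - \<alpha> * v $ i"
proof -
  have "char_matrix walk_mat \<alpha> *\<^sub>v v = walk_mat *\<^sub>v v + (- \<alpha>) \<cdot>\<^sub>v v"
    using assms(1) walk_mat_carrier unfolding char_matrix_def
    by (intro eq_vecI) (auto simp: add_scalar_prod_distrib[of _ m])
  then show ?thesis using assms walk_mat_carrier walk_mat_mult_vec[OF assms] by simp
qed

lemma eigenvector_walk_mat:
  assumes "eigenvector walk_mat v \<alpha>"
  shows "eigenfun \<alpha> (($) v)" and "\<exists>i<m. v $ i \<noteq> 0"
proof -
  have v: "v \<in> carrier_vec m" "v \<noteq> 0\<^sub>v m" "walk_mat *\<^sub>v v = \<alpha> \<cdot>\<^sub>v v"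
    using assms walk_mat_carrier unfolding eigenvector_def by auto
  show "eigenfun \<alpha> (($) v)"
    unfolding eigenfun_def using v walk_mat_mult_vec by (metis carrier_vecD index_smult_vec(1))
  show "\<exists>i<m. v $ i \<noteq> 0"
    using v(1,2) by (metis carrier_vecD eq_vecI index_zero_vec)
qed

lemma gen_eigenvector_walk_mat:
  assumes "v \<in> mat_kernel (char_matrix walk_mat \<alpha> ^\<^sub>m 2)"
  shows "eigenfun \<alpha> (($) v)"
proof -
  define C where "C = char_matrix walk_mat \<alpha>"
  have C: "C \<in> carrier_mat m m" unfolding C_def using walk_mat_carrier by simp
  have "C ^\<^sub>m 2 = C * C" by (simp add: numeral_2_eq_2 C)
  then have v: "v \<in> carrier_vec m" "C *\<^sub>v (C *\<^sub>v v) = 0\<^sub>v m"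
    using assms C unfolding C_def[symmetric]
    by (auto simp: mat_kernel_def assoc_mult_mat_vec[symmetric])
  define w where "w = C *\<^sub>v v"
  have w: "w \<in> carrier_vec m" using C v(1) unfolding w_def by simp
  have w_index: "w $ i = walk (($) v) i - \<alpha> * v $ i" if "i < m" for i
    unfolding w_def C_def by (rule char_matrix_walk_mat_mult_vec[OF v(1) that])
  have "eigenfun \<alpha> (\<lambda>i. walk (($) v) i - \<alpha> * v $ i)"
    unfolding eigenfun_def
  proof (intro allI impI)
    fix i assume "i < m"
    have "walk (($) w) i - \<alpha> * w $ i = 0"
      using char_matrix_walk_mat_mult_vec[OF w \<open>i < m\<close>, of \<alpha>] v(2) \<open>i < m\<close>
      unfolding w_def C_def by simp
    moreover have "walk (($) w) i = walk (\<lambda>j. walk (($) v) j - \<alpha> * v $ j) i"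
      using w_index by (rule walk_cong)
    ultimately show "walk (\<lambda>j. walk (($) v) j - \<alpha> * v $ j) i = \<alpha> * (walk (($) v) i - \<alpha> * v $ i)"
      using w_index[OF \<open>i < m\<close>] by simp
  qed
  then show ?thesis by (rule generalised_eigenfun)
qed


lemma complex_eigenvector_walk_mat_form:
  assumes "eigenvector (map_mat complex_of_real walk_mat) v a"
  shows "(\<Sum>i<m. \<Sum>j<m. of_real (adj i j) * cnj (v $ i) * v $ j)
    = a * of_real (\<Sum>i<m. vdeg i * (cmod (v $ i))\<^sup>2)"
proof -
  define C where "C = map_mat complex_of_real walk_mat"
  have v: "v \<in> carrier_vec m" "C *\<^sub>v v = a \<cdot>\<^sub>v v"
    using assms unfolding eigenvector_def C_def walk_mat_def by auto
  have "(\<Sum>i<m. \<Sum>j<m. of_real (adj i j) * cnj (v $ i) * v $ j)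
      = (\<Sum>i<m. a * of_real (vdeg i * (cmod (v $ i))\<^sup>2))"
  proof (intro sum.cong refl)
    fix i assume "i \<in> {..<m}"
    then have "i < m" by simp
    have "a * v $ i = (C *\<^sub>v v) $ i" using v \<open>i < m\<close> by simp
    also have "\<dots> = (\<Sum>j<m. of_real (adj i j) * v $ j) / of_real (vdeg i)"
      using v(1) \<open>i < m\<close> unfolding C_def walk_mat_def
      by (simp add: scalar_prod_def atLeast0LessThan sum_divide_distrib)
    finally have row: "(\<Sum>j<m. of_real (adj i j) * v $ j) = of_real (vdeg i) * (a * v $ i)"
      using vdeg_pos[OF \<open>i < m\<close>] by (simp add: field_simps)
    have "(\<Sum>j<m. of_real (adj i j) * cnj (v $ i) * v $ j) = cnj (v $ i) * (\<Sum>j<m. of_real (adj i j) * v $ j)"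
      by (simp add: sum_distrib_left mult_ac)
    also have "\<dots> = cnj (v $ i) * (of_real (vdeg i) * (a * v $ i))"
      unfolding row ..
    also have "\<dots> = a * of_real (vdeg i) * (v $ i * cnj (v $ i))"
      by (simp add: mult_ac)
    also have "\<dots> = a * of_real (vdeg i * (cmod (v $ i))\<^sup>2)"
      by (simp only: complex_norm_square[symmetric] of_real_mult mult.assoc)
    finally show "(\<Sum>j<m. of_real (adj i j) * cnj (v $ i) * v $ j) = a * of_real (vdeg i * (cmod (v $ i))\<^sup>2)" .
  qed
  then show ?thesis by (simp add: sum_distrib_left)
qed

text \<open>The Hermitian form of the symmetric adjacency is real and equals the eigenvalue times a
  positive real.\<close>
lemma complex_eigenvalue_walk_mat_real:
  assumes "eigenvector (map_mat complex_of_real walk_mat) v a"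
  shows "a \<in> \<real>"
proof -
  define H where "H = (\<Sum>i<m. \<Sum>j<m. of_real (adj i j) * cnj (v $ i) * v $ j)"
  define N where "N = (\<Sum>i<m. vdeg i * (cmod (v $ i))\<^sup>2)"
  have "cnj H = H"
    unfolding H_def by (subst sum.swap) (simp add: adj_sym mult_ac)
  have v: "v \<in> carrier_vec m" "v \<noteq> 0\<^sub>v m"
    using assms unfolding eigenvector_def walk_mat_def by auto
  then obtain i where i: "i < m" "v $ i \<noteq> 0" by (metis carrier_vecD eq_vecI index_zero_vec)
  have "0 < vdeg i * (cmod (v $ i))\<^sup>2" using vdeg_pos[OF i(1)] i(2) by simp
  also have "\<dots> \<le> N"
    unfolding N_def using i(1) by (intro member_le_sum) (auto dest!: vdeg_pos)
  finally have "N > 0" .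
  moreover have "H = a * of_real N"
    unfolding H_def N_def by (rule complex_eigenvector_walk_mat_form[OF assms])
  ultimately show ?thesis
    using \<open>cnj H = H\<close> by (auto simp: complex_eq_iff complex_is_Real_iff)
qed

lemma char_poly_walk_mat_splits:
  obtains rs where "char_poly walk_mat = (\<Prod>r\<leftarrow>rs. [:- r, 1:])" and "length rs = m"
proof -
  interpret of_real_poly: map_poly_inj_comm_ring_hom "of_real :: real \<Rightarrow> complex" ..
  define C where "C = map_mat complex_of_real walk_mat"
  have C: "C \<in> carrier_mat m m" using walk_mat_carrier by (simp add: C_def)
  obtain as where as: "char_poly C = (\<Prod>a\<leftarrow>as. [:- a, 1:])" "length as = m"
    using char_poly_factorized[OF C] by blast
  have "a \<in> \<real>" if "a \<in> set as" for a
  proof -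
    have "poly (char_poly C) a = 0" using that by (simp add: as poly_prod_list prod_list_zero_iff)
    then obtain v where "eigenvector C v a"
      using eigenvalue_root_char_poly[OF C] unfolding eigenvalue_def by blast
    then show ?thesis using complex_eigenvalue_walk_mat_real unfolding C_def by blast
  qed
  then have as_real: "as = map of_real (map Re as)"
    by (induction as) (auto simp: complex_is_Real_iff complex_eq_iff)
  have "map_poly of_real (char_poly walk_mat) = char_poly C"
    by (simp add: C_def of_real_hom.char_poly_hom[OF walk_mat_carrier])
  also have "\<dots> = map_poly of_real (\<Prod>r\<leftarrow>map Re as. [:- r, 1:])"
    by (subst as(1), subst as_real) (simp add: of_real_poly.hom_prod_list o_def)
  finally show thesis using that[of "map Re as"] as(2) by simp
qed


end

context sym_walk_poincare
begin

lemma large_eigenvalues_eq: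
  assumes u: "eigenfun \<alpha> u" "i < m" "u i \<noteq> 0" and v: "eigenfun \<beta> v" "j < m" "v j \<noteq> 0"
    and large: "\<alpha> > 1 - 1 / (2 * K)" "\<beta> > 1 - 1 / (2 * K)"
  shows "\<alpha> = \<beta>"
proof -
  have "mass u \<noteq> 0" using large_eigenfun_mass_zero[OF u(1) large(1)] u(2,3) by blast
  define c where "c = mass v / mass u"
  have v_eq: "v k = c * u k" if "k < m" for k
    using large_eigenfuns_dependent[OF u(1) v(1) large that] \<open>mass u \<noteq> 0\<close>
    by (simp add: c_def field_simps)
  have "\<beta> * v j = walk v j" using v unfolding eigenfun_def by simp
  also have "\<dots> = walk (\<lambda>k. c * u k + 0 * u k) j" using v_eq by (intro walk_cong) simp
  also have "\<dots> = \<alpha> * v j" using u v_eq[OF v(2)] unfolding walk_lin eigenfun_def by (simp add: v(2))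
  finally show ?thesis using v(3) by simp
qed

lemma large_gen_eigenspace_dim_le_1:
  assumes large: "\<alpha> > 1 - 1 / (2 * K)"
  shows "kernel_dim (char_matrix walk_mat \<alpha> ^\<^sub>m 2) \<le> 1"
proof -
  define B where "B = char_matrix walk_mat \<alpha> ^\<^sub>m 2"
  have B: "B \<in> carrier_mat m m" using walk_mat_carrier by (simp add: B_def)
  have eig: "eigenfun \<alpha> (($) v)" if "v \<in> mat_kernel B" for v
    using that unfolding B_def by (rule gen_eigenvector_walk_mat)
  have "kernel_dim B \<le> 1"
  proof (cases "\<exists>u\<in>mat_kernel B. \<exists>i<m. u $ i \<noteq> 0")
    case True
    then obtain u i where u: "u \<in> mat_kernel B" "i < m" "u $ i \<noteq> 0" by blast
    then have "mass (($) u) \<noteq> 0" using large_eigenfun_mass_zero[OF eig large] by blast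
    show ?thesis
    proof (rule kernel_dim_le_1[OF B u(1)])
      fix v assume v: "v \<in> mat_kernel B"
      have "v $ j = (mass (($) v) / mass (($) u)) * u $ j" if "j < m" for j
        using large_eigenfuns_dependent[OF eig[OF u(1)] eig[OF v] large large that]
          \<open>mass (($) u) \<noteq> 0\<close> by (simp add: field_simps)
      then have "v = (mass (($) v) / mass (($) u)) \<cdot>\<^sub>v u"
        using u(1) v B by (intro eq_vecI) (auto simp: mat_kernel_def)
      then show "\<exists>c. v = c \<cdot>\<^sub>v u" by blast
    qed
  next
    case False
    have "0\<^sub>v m \<in> mat_kernel B"
      by (rule mat_kernelI[OF B]) (use B in \<open>auto intro!: eq_vecI simp: scalar_prod_def\<close>)
    then show ?thesis
    proof (rule kernel_dim_le_1[OF B])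
      fix v assume "v \<in> mat_kernel B"
      then have "v = 0 \<cdot>\<^sub>v 0\<^sub>v m" using False B by (intro eq_vecI) (auto simp: mat_kernel_def)
      then show "\<exists>c. v = c \<cdot>\<^sub>v 0\<^sub>v m" by blast
    qed
  qed
  then show ?thesis by (simp add: B_def)
qed

lemma large_eigenvalue_order_le_1:
  assumes large: "\<alpha> > 1 - 1 / (2 * K)"
  shows "Polynomial.order \<alpha> (char_poly walk_mat) \<le> 1"
proof -
  obtain rs where "char_poly walk_mat = (\<Prod>r\<leftarrow>rs. [:- r, 1:])"
    using char_poly_walk_mat_splits by blast
  from min_order_le_dim_gen_eigenspace[OF walk_mat_carrier this, of 2 \<alpha>]
  show ?thesis using large_gen_eigenspace_dim_le_1[OF large] unfolding dim_gen_eigenspace_def by linarith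
qed

lemma second_eigenvalue_le:
  assumes "2 \<le> m"
  shows "eigenvalues_desc walk_mat ! 1 \<le> 1 - 1 / (2 * K)"
proof (rule ccontr)
  obtain rs where rs: "char_poly walk_mat = (\<Prod>r\<leftarrow>rs. [:- r, 1:])" "length rs = m"
    using char_poly_walk_mat_splits by blast
  note top = eigenvalues_desc_top_two[OF walk_mat_carrier rs assms]
  define x y where "x = eigenvalues_desc walk_mat ! 0" and "y = eigenvalues_desc walk_mat ! 1"
  assume "\<not> eigenvalues_desc walk_mat ! 1 \<le> 1 - 1 / (2 * K)"
  then have large: "x > 1 - 1 / (2 * K)" "y > 1 - 1 / (2 * K)"
    using top(1) unfolding x_def y_def by simp_all
  show False
  proof (cases "x = y")
    case True
    then show False
      using top(4) large_eigenvalue_order_le_1[OF large(2)] unfolding x_def y_def by simp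
  next
    case False
    obtain v w where "eigenvector walk_mat v x" "eigenvector walk_mat w y"
      using top(2,3) unfolding eigenvalue_def x_def y_def by blast
    then show False
      using False large_eigenvalues_eq[OF _ _ _ _ _ _ large] eigenvector_walk_mat by metis
  qed
qed

end

section \<open>Spectral gap of cut-expanding induced subgraphs\<close>

lemma deg_eq_sum: "finite U \<Longrightarrow> real (deg E v U) = (\<Sum>u\<in>U. of_bool (E v u))"
  unfolding deg_def by (simp add: sum.If_cases Int_def conj_commute)

lemma enum_of_set_distinct: "finite U \<Longrightarrow> set (enum_of U) = U \<and> distinct (enum_of U)"
  unfolding enum_of_def by (rule someI_ex) (rule finite_distinct_list)

lemma cut_expander_reindex:
  assumes h: "bij_betw h A B" and cut: "cut_expander \<phi> r B"
  shows "cut_expander \<phi> (\<lambda>x y. r (h x) (h y)) A"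
  unfolding cut_expander_def
proof (intro allI impI)
  fix S assume "S \<subseteq> A"
  have inj: "inj_on h S" "inj_on h (A - S)"
    using h \<open>S \<subseteq> A\<close> by (auto simp: bij_betw_def intro: inj_on_subset)
  have "h ` (A - S) = h ` A - h ` S"
    using h \<open>S \<subseteq> A\<close> by (intro inj_on_image_set_diff) (auto simp: bij_betw_def)
  then have image: "h ` S \<subseteq> B" "B - h ` S = h ` (A - S)"
    using h \<open>S \<subseteq> A\<close> by (auto simp: bij_betw_def)
  have "\<phi> * card (h ` S) * card (B - h ` S) \<le> (\<Sum>x\<in>h ` S. \<Sum>y\<in>B - h ` S. r x y)"
    using cut image(1) unfolding cut_expander_def by blast
  then show "\<phi> * card S * card (A - S) \<le> (\<Sum>x\<in>S. \<Sum>y\<in>A - S. r (h x) (h y))"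
    unfolding image(2) using inj by (simp add: card_image sum.reindex)
qed

lemma lambda2_le_of_cut_expander:
  assumes finU: "finite U" and sym: "\<And>x y. E x y \<Longrightarrow> E y x" and \<phi>: "\<phi> > 0"
    and U2: "2 \<le> card U" and deg_pos: "\<And>v. v \<in> U \<Longrightarrow> 0 < deg E v U"
    and cut: "cut_expander \<phi> (\<lambda>x y. of_bool (E x y)) U"
  shows "lambda2 E U \<le> 1 - \<phi>\<^sup>2 / 32"
proof -
  define xs where "xs = enum_of U"
  define m where "m = length xs"
  define R where "R i j = E (xs ! i) (xs ! j)" for i j
  have bij: "bij_betw ((!) xs) {..<m} U"
    using enum_of_set_distinct[OF finU] bij_betw_nth[of xs "{..<m}" U] unfolding xs_def m_def
    by (auto simp: lessThan_atLeast0)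
  have "m = card U" using enum_of_set_distinct[OF finU] distinct_card unfolding m_def xs_def by metis
  have sum_U: "(\<Sum>u\<in>U. g u) = (\<Sum>j<m. g (xs ! j))" for g :: "'a \<Rightarrow> real"
    using sum.reindex_bij_betw[OF bij] by metis
  have deg: "real (deg E (xs ! i) U) = (\<Sum>j<m. of_bool (R i j))" for i
    unfolding R_def deg_eq_sum[OF finU] sum_U ..
  interpret sym_walk m R
  proof
    show "R i j \<Longrightarrow> R j i" for i j using sym unfolding R_def by blast
    show "\<exists>j<m. R i j" if "i < m" for i
      using deg_pos[of "xs ! i"] bij that deg[of i] unfolding R_def
      by (auto simp: bij_betw_def deg_def card_gt_0_iff)
  qed
  have "walk_matrix E U = walk_mat"
    unfolding walk_matrix_def walk_mat_def Let_def xs_def[symmetric] m_def[symmetric]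
    by (rule eq_matI) (auto simp: adj_def vdeg_def deg R_def)
  have "cut_expander \<phi> adj {..<m}"
    using cut_expander_reindex[OF bij cut] unfolding adj_def[abs_def] R_def .
  then have "\<phi>\<^sup>2 * inner_deg f f \<le> 16 * dirichlet f" if "mass f = 0" for f
    using cut_expander_poincare[of "{..<m}" \<phi> adj f] \<phi> that
    by (simp add: adj_def inner_deg_def mass_def dirichlet_def vdeg_def power2_eq_square mult_ac)
  then interpret sym_walk_poincare m R "16 / \<phi>\<^sup>2"
    using \<phi> by unfold_locales (simp_all add: field_simps)
  have "eigenvalues_desc walk_mat ! 1 \<le> 1 - 1 / (2 * (16 / \<phi>\<^sup>2))"
    using U2 \<open>m = card U\<close> by (intro second_eigenvalue_le) simp
  then show ?thesis
    unfolding lambda2_def \<open>walk_matrix E U = walk_mat\<close> by simp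
qed

section \<open>Labellings of minimal potential\<close>

definition edges :: "('a \<Rightarrow> 'a \<Rightarrow> bool) \<Rightarrow> 'a set \<Rightarrow> 'a set \<Rightarrow> real" where
  "edges E A B = (\<Sum>x\<in>A. \<Sum>y\<in>B. of_bool (E x y))"

lemma deg_eq_edges: "finite U \<Longrightarrow> real (deg E v U) = edges E {v} U"
  by (simp add: edges_def deg_eq_sum)

lemma sum_sum_split_sym:
  fixes D :: "'a \<Rightarrow> 'a \<Rightarrow> real"
  assumes fin: "finite V" and SV: "S \<subseteq> V"
    and inS: "\<And>x y. x \<in> S \<Longrightarrow> y \<in> S \<Longrightarrow> D x y = 0"
    and outS: "\<And>x y. x \<in> V - S \<Longrightarrow> y \<in> V - S \<Longrightarrow> D x y = 0"
    and sym: "\<And>x y. D x y = D y x"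
  shows "(\<Sum>x\<in>V. \<Sum>y\<in>V. D x y) = 2 * (\<Sum>x\<in>S. \<Sum>y\<in>V - S. D x y)"
proof -
  have split: "(\<Sum>y\<in>V. h y) = (\<Sum>y\<in>S. h y) + (\<Sum>y\<in>V - S. h y)" for h :: "'a \<Rightarrow> real"
    using fin SV by (metis add.commute sum.subset_diff)
  have "(\<Sum>x\<in>V. \<Sum>y\<in>V. D x y)
      = (\<Sum>x\<in>S. (\<Sum>y\<in>S. D x y) + (\<Sum>y\<in>V - S. D x y)) + (\<Sum>x\<in>V - S. (\<Sum>y\<in>S. D x y) + (\<Sum>y\<in>V - S. D x y))"
    by (simp add: split[symmetric])
  also have "\<dots> = (\<Sum>x\<in>S. \<Sum>y\<in>V - S. D x y) + (\<Sum>x\<in>V - S. \<Sum>y\<in>S. D x y)"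
    using inS outS by (simp add: sum.distrib)
  also have "(\<Sum>x\<in>V - S. \<Sum>y\<in>S. D x y) = (\<Sum>x\<in>S. \<Sum>y\<in>V - S. D x y)"
    by (subst sum.swap) (simp add: sym)
  finally show ?thesis by simp
qed

lemma edges_le_card_mult: "edges E A B \<le> card A * card B"
proof -
  have "edges E A B \<le> (\<Sum>x\<in>A. \<Sum>y\<in>B. 1)" unfolding edges_def by (intro sum_mono) simp
  then show ?thesis by simp
qed

lemma card_eq_sum_card_fibres:
  "finite V \<Longrightarrow> real (card V) = (\<Sum>a\<in>c ` V. real (card {x\<in>V. c x = a}))"
  using sum.group[OF _ finite_imageI subset_refl, where g = c and h = "\<lambda>_. 1::real"] by simp

lemma card_image_mult_le:
  fixes s :: real
  assumes "finite V" and "\<And>a. a \<in> c ` V \<Longrightarrow> s \<le> card {x\<in>V. c x = a}"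
  shows "card (c ` V) * s \<le> card V"
  using sum_mono[of "c ` V" "\<lambda>_. s" "\<lambda>a. real (card {x\<in>V. c x = a})"] assms
    card_eq_sum_card_fibres[OF assms(1), of c]
  by simp

lemma card_image_le_of_large_fibres:
  fixes \<delta> :: real
  assumes fin: "finite V" and \<delta>: "0 < \<delta>"
    and size: "\<And>a. a \<in> c ` V \<Longrightarrow> \<delta> * card V / 2 \<le> card {x\<in>V. c x = a}"
  shows "card (c ` V) \<le> 2 / \<delta>"
proof (cases "V = {}")
  case False
  then have "0 < real (card V)" using fin by (simp add: card_gt_0_iff)
  have "(\<delta> * card (c ` V)) * real (card V) \<le> 2 * real (card V)"
    using card_image_mult_le[OF fin size] by (simp add: algebra_simps)
  then have "\<delta> * card (c ` V) \<le> 2" using \<open>0 < real (card V)\<close> by (simp only: mult_le_cancel_right_pos)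
  then show ?thesis using \<delta> by (simp add: field_simps)
qed (use \<delta> in simp)

lemma two_le_card_of_deg_pos:
  assumes "finite U" and "v \<in> U" and "0 < deg E v U" and "\<not> E v v"
  shows "2 \<le> card U"
proof -
  obtain u where "u \<in> U" "E v u" using assms(3) unfolding deg_def by (auto simp: card_gt_0_iff)
  then have "card {u, v} \<le> card U" using assms by (intro card_mono) auto
  with \<open>E v u\<close> assms(4) show ?thesis by (cases "u = v") auto
qed

locale finite_sym_graph =
  fixes E :: "'a \<Rightarrow> 'a \<Rightarrow> bool" and V :: "'a set"
  assumes finite_V: "finite V" and E_sym: "\<And>x y. E x y \<Longrightarrow> E y x"
begin

definition potential :: "real \<Rightarrow> ('a \<Rightarrow> nat) \<Rightarrow> real" where
  "potential \<phi> c = (\<Sum>x\<in>V. \<Sum>y\<in>V. if c x = c y then \<phi> else of_bool (E x y))"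

lemma potential_move_diff:
  assumes S: "S \<subseteq> {x\<in>V. c x = a}" and "a \<noteq> b"
  shows "potential \<phi> (\<lambda>x. if x \<in> S then b else c x) - potential \<phi> c
    = 2 * (edges E S ({x\<in>V. c x = a} - S) - \<phi> * card S * card ({x\<in>V. c x = a} - S)
      + \<phi> * card S * card {x\<in>V. c x = b} - edges E S {x\<in>V. c x = b})"
proof -
  define c' where "c' x = (if x \<in> S then b else c x)" for x
  define w :: "('a \<Rightarrow> nat) \<Rightarrow> 'a \<Rightarrow> 'a \<Rightarrow> real"
    where "w d x y = (if d x = d y then \<phi> else of_bool (E x y))" for d x y
  define D where "D x y = w c' x y - w c x y" for x y
  have SV: "S \<subseteq> V" and ca: "\<And>x. x \<in> S \<Longrightarrow> c x = a" using S by auto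
  have "potential \<phi> c' - potential \<phi> c = (\<Sum>x\<in>V. \<Sum>y\<in>V. D x y)"
    unfolding potential_def D_def w_def by (simp add: sum_subtractf)
  also have "\<dots> = 2 * (\<Sum>x\<in>S. \<Sum>y\<in>V - S. D x y)"
  proof (rule sum_sum_split_sym[OF finite_V SV])
    show "D x y = 0" if "x \<in> S" "y \<in> S" for x y
      using that ca unfolding D_def w_def c'_def by auto
    show "D x y = 0" if "x \<in> V - S" "y \<in> V - S" for x y
      using that unfolding D_def w_def c'_def by auto
    have "w d x y = w d y x" for d x y
      using E_sym[of x y] E_sym[of y x] unfolding w_def by (cases "d x = d y") auto
    then show "D x y = D y x" for x y
      unfolding D_def by simp
  qed
  also have "(\<Sum>x\<in>S. \<Sum>y\<in>V - S. D x y) = (\<Sum>x\<in>S. \<Sum>y\<in>V - S.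
      (if c y = b then \<phi> - of_bool (E x y) else 0) + (if c y = a then of_bool (E x y) - \<phi> else 0))"
    using ca \<open>a \<noteq> b\<close> unfolding D_def w_def c'_def by (intro sum.cong refl) auto
  also have "\<dots> = (\<Sum>x\<in>S. (\<Sum>y\<in>{x\<in>V. c x = b}. \<phi> - of_bool (E x y))
      + (\<Sum>y\<in>{x\<in>V. c x = a} - S. of_bool (E x y) - \<phi>))"
  proof -
    have "{y \<in> V - S. c y = b} = {x\<in>V. c x = b}" "{y \<in> V - S. c y = a} = {x\<in>V. c x = a} - S"
      using ca \<open>a \<noteq> b\<close> by auto
    then show ?thesis
      using finite_V by (simp add: sum.distrib flip: sum.inter_filter)
  qed
  also have "\<dots> = \<phi> * card S * card {x\<in>V. c x = b} - edges E S {x\<in>V. c x = b}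
      + (edges E S ({x\<in>V. c x = a} - S) - \<phi> * card S * card ({x\<in>V. c x = a} - S))"
    by (simp add: edges_def sum.distrib sum_subtractf)
  finally show ?thesis
    unfolding c'_def[abs_def] by simp
qed

lemma exists_min_potential:
  assumes "0 < N"
  obtains c where "c \<in> V \<rightarrow>\<^sub>E {..<N}"
    and "\<And>c'. c' \<in> V \<rightarrow>\<^sub>E {..<N} \<Longrightarrow> potential \<phi> c \<le> potential \<phi> c'"
proof -
  have fin: "finite (V \<rightarrow>\<^sub>E {..<N})" using finite_V by (intro finite_PiE) auto
  have "(\<lambda>x\<in>V. 0) \<in> V \<rightarrow>\<^sub>E {..<N}" using assms by auto
  then have "potential \<phi> ` (V \<rightarrow>\<^sub>E {..<N}) \<noteq> {}" by blast
  then have "Min (potential \<phi> ` (V \<rightarrow>\<^sub>E {..<N})) \<in> potential \<phi> ` (V \<rightarrow>\<^sub>E {..<N})"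
    using fin by (intro Min_in) simp_all
  then obtain c where "c \<in> V \<rightarrow>\<^sub>E {..<N}" "potential \<phi> c = Min (potential \<phi> ` (V \<rightarrow>\<^sub>E {..<N}))"
    by auto
  then show thesis using that fin by simp
qed

end

text \<open>As \<open>card V < N\<close>, some label is unused, so any set of vertices can be moved to a part of
  its own.\<close>
locale min_potential_labelling = finite_sym_graph +
  fixes \<phi> :: real and N :: nat and c :: "'a \<Rightarrow> nat"
  assumes phi_nonneg: "0 \<le> \<phi>" and enough_labels: "card V < N"
    and labelling: "c \<in> V \<rightarrow>\<^sub>E {..<N}"
    and minimal: "\<And>c'. c' \<in> V \<rightarrow>\<^sub>E {..<N} \<Longrightarrow> potential \<phi> c \<le> potential \<phi> c'"
begin

definition part :: "nat \<Rightarrow> 'a set" where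
  "part a = {x\<in>V. c x = a}"

lemma finite_part: "finite (part a)"
  using finite_V unfolding part_def by simp

lemma part_eq_empty_iff: "part a = {} \<longleftrightarrow> a \<notin> c ` V"
  unfolding part_def by auto

lemma move_gain_le:
  assumes S: "S \<subseteq> part a" and "a \<noteq> b" and "b < N"
  shows "\<phi> * card S * card (part a - S) - edges E S (part a - S)
    \<le> \<phi> * card S * card (part b) - edges E S (part b)"
proof -
  have "(\<lambda>x. if x \<in> S then b else c x) \<in> V \<rightarrow>\<^sub>E {..<N}"
    using labelling S \<open>b < N\<close> by (auto simp: part_def PiE_def Pi_def extensional_def)
  then show ?thesis
    using minimal potential_move_diff[OF S[unfolded part_def] \<open>a \<noteq> b\<close>, of \<phi>]
    unfolding part_def by fastforce
qed

lemma part_cut_expander: "cut_expander \<phi> (\<lambda>x y. of_bool (E x y)) (part a)"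
  unfolding cut_expander_def
proof (intro allI impI)
  fix S assume S: "S \<subseteq> part a"
  have "card (c ` V) < N" using card_image_le[OF finite_V, of c] enough_labels by linarith
  then have "\<not> {..<N} \<subseteq> c ` V"
    using card_mono[OF finite_imageI[OF finite_V], of "{..<N}" c] by auto
  then obtain b where "b < N" "b \<notin> c ` V" by auto
  then have "part b = {}" by (simp add: part_eq_empty_iff)
  then have "\<phi> * card S * card (part a - S) \<le> edges E S (part a - S)"
    using move_gain_le[OF S _ \<open>b < N\<close>] S by (cases "a = b") (auto simp: edges_def)
  then show "\<phi> * card S * card (part a - S) \<le> (\<Sum>x\<in>S. \<Sum>y\<in>part a - S. of_bool (E x y))"
    by (simp add: edges_def)
qed

lemma edges_between_parts_le:
  assumes "a \<noteq> b" and "b < N"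
  shows "edges E (part a) (part b) \<le> \<phi> * card (part a) * card (part b)"
  using move_gain_le[OF order_refl assms] by (simp add: edges_def)

lemma edges_vertex_part_le:
  assumes v: "v \<in> part a" and "b < N"
  shows "edges E {v} (part b) \<le> edges E {v} (part a) + \<phi> * card (part b)"
proof (cases "a = b")
  case False
  have "edges E {v} (part a - {v}) \<le> edges E {v} (part a)"
    by (simp add: edges_def) (rule sum_mono2, auto simp: finite_part)
  moreover have "\<phi> * card (part a - {v}) - edges E {v} (part a - {v})
      \<le> \<phi> * card (part b) - edges E {v} (part b)"
    using move_gain_le[of "{v}" a b] v False \<open>b < N\<close> by simp
  moreover have "0 \<le> \<phi> * card (part a - {v})" using phi_nonneg by simp
  ultimately show ?thesis by linarith
qed (use phi_nonneg in simp)

lemma edges_split_parts: "edges E A V = (\<Sum>b\<in>c ` V. edges E A (part b))"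
  unfolding edges_def part_def using finite_V
  by (subst sum.swap, subst (2) sum.swap, simp add: sum.group)

lemma part_card_ge:
  fixes \<delta> :: real
  assumes mindeg: "\<forall>v\<in>V. \<delta> * card V \<le> deg E v V" and a: "a \<in> c ` V"
  shows "(\<delta> - \<phi>) * card V \<le> card (part a)"
proof -
  define p n where "p = real (card (part a))" and "n = real (card V)"
  have labels: "b < N" if "b \<in> c ` V" for b using that labelling by auto
  have "part a \<noteq> {}" using a part_eq_empty_iff by blast
  then have "p > 0" using finite_part by (simp add: p_def card_gt_0_iff)
  have "p * (\<delta> * n) \<le> (\<Sum>v\<in>part a. real (deg E v V))"
    using mindeg sum_mono[of "part a" "\<lambda>_. \<delta> * n"] unfolding p_def n_def part_def by force
  also have "\<dots> = edges E (part a) V"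
    unfolding edges_def by (intro sum.cong refl) (rule deg_eq_sum[OF finite_V])
  also have "\<dots> = edges E (part a) (part a) + (\<Sum>b\<in>c ` V - {a}. edges E (part a) (part b))"
    using a finite_V by (simp add: edges_split_parts sum.remove)
  also have "\<dots> \<le> p * p + (\<Sum>b\<in>c ` V - {a}. \<phi> * p * card (part b))"
    using edges_le_card_mult[of E "part a" "part a"] edges_between_parts_le labels
    unfolding p_def by (intro add_mono sum_mono) auto
  also have "\<dots> = p * p + \<phi> * p * (n - p)"
  proof -
    have "n = p + (\<Sum>b\<in>c ` V - {a}. real (card (part b)))"
      using a finite_V card_eq_sum_card_fibres[OF finite_V, of c]
      by (simp add: sum.remove p_def n_def part_def)
    then show ?thesis by (simp add: sum_distrib_left)
  qed
  also have "\<dots> \<le> p * (p + \<phi> * n)"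
    using phi_nonneg \<open>p > 0\<close> by (simp add: algebra_simps)
  finally have "\<delta> * n \<le> p + \<phi> * n" using \<open>p > 0\<close> by simp
  then show ?thesis by (simp add: p_def n_def algebra_simps)
qed

lemma min_degree_le_card_labels_mult:
  fixes \<delta> :: real
  assumes mindeg: "\<forall>v\<in>V. \<delta> * card V \<le> deg E v V" and v: "v \<in> part a"
  shows "\<delta> * card V \<le> card (c ` V) * (deg E v (part a) + \<phi> * card V)"
proof -
  have "v \<in> V" using v by (simp add: part_def)
  have "\<delta> * card V \<le> edges E {v} V" using mindeg \<open>v \<in> V\<close> finite_V by (simp add: deg_eq_edges)
  also have "\<dots> = (\<Sum>b\<in>c ` V. edges E {v} (part b))" by (rule edges_split_parts)
  also have "\<dots> \<le> (\<Sum>b\<in>c ` V. deg E v (part a) + \<phi> * card V)"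
  proof (intro sum_mono)
    fix b assume "b \<in> c ` V"
    then have "b < N" using labelling by auto
    have "card (part b) \<le> card V" using finite_V by (intro card_mono) (auto simp: part_def)
    then have "\<phi> * card (part b) \<le> \<phi> * card V" using phi_nonneg by (simp add: mult_left_mono)
    then show "edges E {v} (part b) \<le> deg E v (part a) + \<phi> * card V"
      using edges_vertex_part_le[OF v \<open>b < N\<close>] deg_eq_edges[OF finite_part] by simp
  qed
  finally show ?thesis by simp
qed

context
  fixes \<delta> :: real
  assumes delta: "0 < \<delta>" "\<delta> \<le> 1" and phi_eq: "\<phi> = \<delta>\<^sup>2 / 4"
    and mindeg: "\<forall>v\<in>V. \<delta> * card V \<le> deg E v V"
begin

lemma part_card_ge_half:
  assumes "a \<in> c ` V"
  shows "\<delta> * card V / 2 \<le> card (part a)"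
proof -
  have "\<delta> * \<delta> \<le> \<delta>" using delta by (simp add: mult_le_cancel_left1)
  then have "\<delta> / 2 \<le> \<delta> - \<phi>" using delta unfolding phi_eq power2_eq_square by linarith
  then have "\<delta> * card V / 2 \<le> (\<delta> - \<phi>) * card V"
    using mult_right_mono[of "\<delta> / 2" "\<delta> - \<phi>" "card V"] by simp
  with part_card_ge[OF mindeg assms] show ?thesis by linarith
qed

lemma card_labels_le: "card (c ` V) \<le> 2 / \<delta>"
  using part_card_ge_half unfolding part_def
  by (rule card_image_le_of_large_fibres[OF finite_V delta(1)])

lemma vertex_deg_part_ge:
  assumes "v \<in> part a"
  shows "\<delta>\<^sup>2 * card V / 4 \<le> deg E v (part a)"
proof -
  have "\<delta> * card V \<le> card (c ` V) * (deg E v (part a) + \<phi> * card V)"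
    by (rule min_degree_le_card_labels_mult[OF mindeg assms])
  also have "\<dots> \<le> 2 / \<delta> * (deg E v (part a) + \<phi> * card V)"
    using card_labels_le phi_nonneg by (intro mult_right_mono) auto
  finally show ?thesis using delta unfolding phi_eq by (simp add: field_simps power2_eq_square)
qed

lemma part_spectral_gap_ge:
  assumes irrefl: "\<And>x. \<not> E x x" and a: "a \<in> c ` V"
  shows "\<delta> ^ 4 / 512 \<le> spectral_gap E (part a)"
proof -
  obtain v where v: "v \<in> part a" using a by (auto simp: part_def)
  then have "V \<noteq> {}" by (auto simp: part_def)
  then have "0 < \<delta>\<^sup>2 * card V / 4" using delta finite_V by (simp add: card_gt_0_iff)
  then have deg_pos: "0 < deg E u (part a)" if "u \<in> part a" for u
    using vertex_deg_part_ge[OF that] by linarith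
  have "0 < \<phi>" using delta by (simp add: phi_eq)
  then have "lambda2 E (part a) \<le> 1 - \<phi>\<^sup>2 / 32"
    using two_le_card_of_deg_pos[OF finite_part v deg_pos[OF v] irrefl]
    by (intro lambda2_le_of_cut_expander[OF finite_part E_sym _ _ deg_pos part_cut_expander])
  moreover have "\<phi>\<^sup>2 / 32 = \<delta> ^ 4 / 512"
    unfolding phi_eq by (simp add: power_divide flip: power_mult)
  ultimately show ?thesis unfolding spectral_gap_def by simp
qed

end

end

section \<open>The primary decomposition\<close>

lemma (in finite_sym_graph) exists_min_potential_labelling:
  assumes "0 \<le> \<phi>"
  obtains c where "min_potential_labelling E V \<phi> (card V + 1) c"
proof -
  obtain c where "c \<in> V \<rightarrow>\<^sub>E {..<card V + 1}"
    and "\<And>c'. c' \<in> V \<rightarrow>\<^sub>E {..<card V + 1} \<Longrightarrow> potential \<phi> c \<le> potential \<phi> c'"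
    by (rule exists_min_potential[of "card V + 1" \<phi>]) auto
  then have "min_potential_labelling E V \<phi> (card V + 1) c"
    using assms by (intro min_potential_labelling.intro min_potential_labelling_axioms.intro
      finite_sym_graph_axioms) auto
  then show thesis by (rule that)
qed

lemma unit_interval_power_bounds:
  fixes \<delta> x :: real
  assumes "0 < \<delta>" and "\<delta> \<le> 1" and "0 \<le> x"
  shows "\<delta> ^ 4 * x / 40 \<le> \<delta>\<^sup>2 * x / 4" and "\<delta> ^ 10 / 2 ^ 22 \<le> \<delta> ^ 4 / 512"
proof -
  have "\<delta> ^ 4 \<le> \<delta>\<^sup>2" "\<delta> ^ 10 \<le> \<delta> ^ 4" "0 \<le> \<delta> ^ 4"
    using assms(1,2) power_decreasing[of 2 4 \<delta>] power_decreasing[of 4 10 \<delta>] by simp_all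
  then have "\<delta> ^ 4 / 40 \<le> \<delta>\<^sup>2 / 4" "\<delta> ^ 10 \<le> \<delta> ^ 4 * 8192" by linarith+
  then show "\<delta> ^ 4 * x / 40 \<le> \<delta>\<^sup>2 * x / 4" "\<delta> ^ 10 / 2 ^ 22 \<le> \<delta> ^ 4 / 512"
    using mult_right_mono[of "\<delta> ^ 4 / 40" "\<delta>\<^sup>2 / 4" x] assms(3) by simp_all
qed

lemma primary_decomposition_of_labelling:
  fixes c :: "'a \<Rightarrow> nat" and \<delta> :: real
  assumes fin: "finite V" and \<delta>: "0 < \<delta>"
    and size: "\<And>a. a \<in> c ` V \<Longrightarrow> \<delta> * card V / 2 \<le> card {x\<in>V. c x = a}"
    and deg: "\<And>a v. a \<in> c ` V \<Longrightarrow> v \<in> V \<Longrightarrow> c v = a \<Longrightarrow>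
      \<delta> ^ 4 * card V / 40 \<le> deg E v {x\<in>V. c x = a}"
    and gap: "\<And>a. a \<in> c ` V \<Longrightarrow> \<delta> ^ 10 / 2 ^ 22 \<le> spectral_gap E {x\<in>V. c x = a}"
  shows "\<exists>k Vs. primary_decomposition E V \<delta> k Vs"
proof -
  define ls where "ls = sorted_list_of_set (c ` V)"
  define Vs where "Vs i = {x\<in>V. c x = ls ! i}" for i
  have ls: "set ls = c ` V" "distinct ls" using fin by (simp_all add: ls_def)
  then have labels: "ls ! i \<in> c ` V" if "i < length ls" for i using that nth_mem by blast
  have "real (length ls) \<le> 2 / \<delta>"
    using card_image_le_of_large_fibres[OF fin \<delta> size] distinct_card[OF ls(2)] ls(1) by simp
  moreover have "(\<Union>i<length ls. Vs i) = V"
  proof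
    show "(\<Union>i<length ls. Vs i) \<subseteq> V" by (auto simp: Vs_def)
    show "V \<subseteq> (\<Union>i<length ls. Vs i)"
    proof
      fix x assume "x \<in> V"
      then obtain i where "i < length ls" "ls ! i = c x" using ls(1) by (metis image_eqI in_set_conv_nth)
      then show "x \<in> (\<Union>i<length ls. Vs i)" using \<open>x \<in> V\<close> unfolding Vs_def by force
    qed
  qed
  moreover have "Vs i \<inter> Vs j = {}" if "i < length ls" "j < length ls" "i \<noteq> j" for i j
    using that ls(2) by (auto simp: Vs_def nth_eq_iff_index_eq)
  moreover have "Vs i \<noteq> {}" if "i < length ls" for i
    using labels[OF that] by (auto simp: Vs_def)
  ultimately have "primary_decomposition E V \<delta> (length ls) Vs"
    unfolding primary_decomposition_def using size deg gap labels by (auto simp: Vs_def)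
  then show ?thesis by blast
qed

theorem lemma2p11:
  fixes E :: "'a \<Rightarrow> 'a \<Rightarrow> bool" and V :: "'a set" and \<delta> :: real and n :: nat
  assumes "0 < \<delta>" and "\<delta> \<le> 1"
    and "simple_graph E V" and "card V = n"
    and "\<forall>v\<in>V. real (deg E v V) \<ge> \<delta> * real n"
  shows "\<exists>k Vs. primary_decomposition E V \<delta> k Vs"
proof -
  have fin: "finite V" and sym: "\<And>x y. E x y \<Longrightarrow> E y x" and irrefl: "\<And>x. \<not> E x x"
    using assms(3) unfolding simple_graph_def by auto
  interpret finite_sym_graph E V using fin sym by unfold_locales
  obtain c where "min_potential_labelling E V (\<delta>\<^sup>2 / 4) (card V + 1) c"
    using exists_min_potential_labelling[of "\<delta>\<^sup>2 / 4"] by auto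
  then interpret min_potential_labelling E V "\<delta>\<^sup>2 / 4" "card V + 1" c .
  have mindeg: "\<forall>v\<in>V. \<delta> * card V \<le> deg E v V" using assms(4,5) by simp
  note numeric = unit_interval_power_bounds[OF assms(1,2), of "card V"]
  show ?thesis
  proof (rule primary_decomposition_of_labelling[OF fin assms(1)])
    fix a assume a: "a \<in> c ` V"
    show "\<delta> * card V / 2 \<le> card {x\<in>V. c x = a}"
      using part_card_ge_half[OF assms(1,2) refl mindeg a] unfolding part_def .
    show "\<delta> ^ 10 / 2 ^ 22 \<le> spectral_gap E {x\<in>V. c x = a}"
      using part_spectral_gap_ge[OF assms(1,2) refl mindeg irrefl a] numeric unfolding part_def by simp
    fix v assume "v \<in> V" "c v = a"
    then have "\<delta>\<^sup>2 * card V / 4 \<le> deg E v (part a)"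
      by (intro vertex_deg_part_ge[OF assms(1,2) refl mindeg]) (simp add: part_def)
    then show "\<delta> ^ 4 * card V / 40 \<le> deg E v {x\<in>V. c x = a}"
      using numeric(1) unfolding part_def by linarith
  qed
qed

end
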